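(* Let $(I_t)_{t\in\mathbb{Z}}$ be a stochastic process such that there exists a family $(I_t^n)_{t\in\mathbb{Z}}$, $n\in\mathbb{N}$, of $\{0,1\}$-valued stationary stochastic processes with $P(I_0^n=1)>0$ for all $n$ and $$\mathcal{L}\bigl((I_t^n)_{t\in\{-u,\dots,v\}}\mid I_0^n=1\bigr)\Longrightarrow \mathcal{L}\bigl((I_t)_{t\in\{-u,\dots,v\}}\bigr)\quad (n\to\infty)$$ for all $u,v\in\mathbb{N}$. Let $C=\{t\in\mathbb{Z}: I_t=1\}$. (a) Let $A\subset\mathbb{Z}$ with $0\in A$. Then $P(C=A)=P(C=A-a)$ for all $a\in A$, where $A-a:=\{t\in\mathbb{Z}: a+t\in A\}$. (b) Let $A\subset\mathbb{Z}$ with $0\in A$ and let $t_1,t_2\in\mathbb{Z}$ with $t_1\le 0\le t_2$. Then $$P\bigl(C\cap[t_1,t_2]=A\cap[t_1,t_2]\bigr)=P\bigl(C\cap[t_1-a,t_2-a]=(A-a)\cap[t_1-a,t_2-a]\bigr)$$ for all $a\in A\cap[t_1,t_2]$.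
   Context: $\mathcal{L}(\cdot\mid\cdot)$ denotes conditional law and $\Longrightarrow$ convergence in distribution. Intervals $[t_1,t_2]$ are understood as subsets of $\mathbb{Z}$. *)

theory Defs
  imports "HOL-Probability.Probability"
begin

definition window :: "nat \<Rightarrow> nat \<Rightarrow> (int \<Rightarrow> 'a \<Rightarrow> bool) \<Rightarrow> 'a \<Rightarrow> (int \<Rightarrow> bool)" where
  "window u v X \<omega> = (\<lambda>t. if t \<in> {- int u .. int v} then X t \<omega> else False)"

definition bool_process :: "'a measure \<Rightarrow> (int \<Rightarrow> 'a \<Rightarrow> bool) \<Rightarrow> bool" where
  "bool_process M X \<longleftrightarrow> (\<forall>t. X t \<in> measurable M (count_space UNIV))"

definition stationary :: "'a measure \<Rightarrow> (int \<Rightarrow> 'a \<Rightarrow> bool) \<Rightarrow> bool" where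
  "stationary M X \<longleftrightarrow> (\<forall>s::int.
     distr M (PiM UNIV (\<lambda>_. count_space UNIV)) (\<lambda>\<omega> t. X (t + s) \<omega>) =
     distr M (PiM UNIV (\<lambda>_. count_space UNIV)) (\<lambda>\<omega> t. X t \<omega>))"

definition cond_expect :: "'a measure \<Rightarrow> 'a set \<Rightarrow> ('a \<Rightarrow> real) \<Rightarrow> real" where
  "cond_expect M B g = (\<integral>\<omega>. g \<omega> * indicator B \<omega> \<partial>M) / measure M B"

text \<open>The window takes values in the finite
  discrete space {0,1}^{-u..v}, on which every real function is bounded and continuous, so
  weak convergence means convergence of the expectations of all functions of the window.\<close>
definition cond_window_conv ::
  "(nat \<Rightarrow> 'b measure) \<Rightarrow> (nat \<Rightarrow> int \<Rightarrow> 'b \<Rightarrow> bool) \<Rightarrow> 'a measure \<Rightarrow> (int \<Rightarrow> 'a \<Rightarrow> bool) \<Rightarrow> bool" where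
  "cond_window_conv Mn Xn M X \<longleftrightarrow>
     (\<forall>u v. \<forall>f :: (int \<Rightarrow> bool) \<Rightarrow> real.
        (\<lambda>n. cond_expect (Mn n) {\<omega> \<in> space (Mn n). Xn n 0 \<omega>} (\<lambda>\<omega>. f (window u v (Xn n) \<omega>)))
          \<longlonglongrightarrow> (\<integral>\<omega>. f (window u v X \<omega>) \<partial>M))"

definition shift_set :: "int set \<Rightarrow> int \<Rightarrow> int set" where
  "shift_set A a = {t. a + t \<in> A}"

end

theory Submission
  imports Defs
begin

text \<open>For the approximating processes, conditioning on \<open>I\<^sup>n\<^sub>0 = 1\<close> only rescales
  probabilities of patterns that prescribe \<open>I\<^sub>0 = 1\<close>, by the common factor
  \<open>1 / P(I\<^sup>n\<^sub>0 = 1)\<close>. If a pattern has a \<open>1\<close> at \<open>a\<close>, shifting it by \<open>a\<close> yields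
  again a pattern with a \<open>1\<close> at \<open>0\<close>, of the same probability by stationarity. Hence the
  conditional probabilities of a finite pattern and of its shift coincide for every \<open>n\<close>, and so
  do their limits, the probabilities under \<open>I\<close>; this is (b). Part (a) follows by letting the
  window grow to all of \<open>\<int>\<close>, using continuity of the measure from above.\<close>

definition cylinder ::
    "'a measure \<Rightarrow> (int \<Rightarrow> 'a \<Rightarrow> bool) \<Rightarrow> int set \<Rightarrow> int set \<Rightarrow> 'a set" where
  "cylinder M X J A = {\<omega> \<in> space M. \<forall>t\<in>J. X t \<omega> = (t \<in> A)}"

lemma sets_cylinder:
  assumes "bool_process M X"
  shows "cylinder M X J A \<in> sets M"
proof -
  have "{\<omega> \<in> space M. X t \<omega> = (t \<in> A)} = X t -` {t \<in> A} \<inter> space M" for t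
    by auto
  moreover have "X t \<in> measurable M (count_space UNIV)" for t
    using assms by (simp add: bool_process_def)
  ultimately have "{\<omega> \<in> space M. X t \<omega> = (t \<in> A)} \<in> sets M" for t
    using measurable_sets by (metis sets_UNIV)
  then show ?thesis
    unfolding cylinder_def by (rule sets.sets_Collect_countable_Ball)
qed

lemma shift_set_atLeastAtMost: "shift_set {t1..t2} a = {t1 - a..t2 - a}"
  by (auto simp: shift_set_def)

lemma measure_cylinder_shift:
  assumes "bool_process M X" "stationary M X"
  shows "measure M (cylinder M X J A) = measure M (cylinder M X (shift_set J a) (shift_set A a))"
proof -
  let ?P = "PiM UNIV (\<lambda>_::int. count_space (UNIV :: bool set))"
  let ?S = "{f \<in> space ?P. \<forall>t\<in>shift_set J a. f t = (t \<in> shift_set A a)}"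
  have S: "?S \<in> sets ?P"
    using sets_cylinder[of ?P "\<lambda>t f. f t"]
    by (simp add: cylinder_def bool_process_def measurable_component_singleton)
  have X: "X t \<in> measurable M (count_space UNIV)" for t
    using assms(1) by (simp add: bool_process_def)
  have shifted: "(\<lambda>\<omega> t. X (t + a) \<omega>) \<in> measurable M ?P"
    and unshifted: "(\<lambda>\<omega> t. X t \<omega>) \<in> measurable M ?P"
    by (auto intro!: measurable_PiM_single' X)
  have "cylinder M X J A = (\<lambda>\<omega> t. X (t + a) \<omega>) -` ?S \<inter> space M"
  proof -
    have "(\<forall>t\<in>J. X t \<omega> = (t \<in> A)) \<longleftrightarrow>
        (\<forall>s\<in>shift_set J a. X (s + a) \<omega> = (s \<in> shift_set A a))" for \<omega>
      by (auto simp: shift_set_def add.commute) (metis diff_add_cancel)+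
    then show ?thesis
      by (auto simp: cylinder_def space_PiM)
  qed
  then have "measure M (cylinder M X J A) = measure (distr M ?P (\<lambda>\<omega> t. X (t + a) \<omega>)) ?S"
    by (simp add: measure_distr[OF shifted S])
  also have "\<dots> = measure (distr M ?P (\<lambda>\<omega> t. X t \<omega>)) ?S"
    using assms(2) by (simp add: stationary_def)
  also have "\<dots> = measure M ((\<lambda>\<omega> t. X t \<omega>) -` ?S \<inter> space M)"
    by (rule measure_distr[OF unshifted S])
  also have "(\<lambda>\<omega> t. X t \<omega>) -` ?S \<inter> space M = cylinder M X (shift_set J a) (shift_set A a)"
    by (auto simp: cylinder_def space_PiM)
  finally show ?thesis .
qed

lemma integral_window_pattern:
  assumes "J \<subseteq> {- int u..int v}"
  shows "(\<integral>\<omega>. (of_bool (\<forall>t\<in>J. window u v X \<omega> t = (t \<in> A)) :: real) \<partial>M) =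
    measure M (cylinder M X J A)"
proof -
  have "(\<integral>\<omega>. (of_bool (\<forall>t\<in>J. window u v X \<omega> t = (t \<in> A)) :: real) \<partial>M) =
      (\<integral>\<omega>. indicator (cylinder M X J A) \<omega> \<partial>M)"
    using assms by (intro Bochner_Integration.integral_cong)
      (auto simp: window_def cylinder_def indicator_def subset_iff)
  also have "\<dots> = measure M (cylinder M X J A)"
    by (simp add: cylinder_def Int_absorb2)
  finally show ?thesis .
qed

lemma cond_expect_window_pattern:
  assumes "J \<subseteq> {- int u..int v}" "0 \<in> J" "0 \<in> A"
  shows "cond_expect M {\<omega> \<in> space M. X 0 \<omega>}
      (\<lambda>\<omega>. (of_bool (\<forall>t\<in>J. window u v X \<omega> t = (t \<in> A)) :: real)) =
    measure M (cylinder M X J A) / measure M {\<omega> \<in> space M. X 0 \<omega>}"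
proof -
  have "(\<integral>\<omega>. (of_bool (\<forall>t\<in>J. window u v X \<omega> t = (t \<in> A)) :: real) *
        indicator {\<omega> \<in> space M. X 0 \<omega>} \<omega> \<partial>M) =
      (\<integral>\<omega>. indicator (cylinder M X J A) \<omega> \<partial>M)"
    using assms by (intro Bochner_Integration.integral_cong)
      (auto simp: window_def cylinder_def indicator_def subset_iff)
  also have "\<dots> = measure M (cylinder M X J A)"
    by (simp add: cylinder_def Int_absorb2)
  finally show ?thesis
    by (simp add: cond_expect_def)
qed

lemma finite_window_bound:
  fixes J :: "int set"
  assumes "finite J"
  obtains u :: nat where "J \<subseteq> {- int u..int u}"
proof -
  obtain k where "abs ` J \<subseteq> {..k}"
    using assms finite_int_iff_bounded_le by blast
  then have "J \<subseteq> {- int (nat k)..int (nat k)}"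
    by force
  then show ?thesis
    by (rule that)
qed

lemma measure_cylinder_shift_limit:
  assumes "\<And>n. bool_process (Mn n) (In n)" "\<And>n. stationary (Mn n) (In n)"
    and conv: "cond_window_conv Mn In M I"
    and "finite J" "0 \<in> J" "a \<in> J" "0 \<in> A" "a \<in> A"
  shows "measure M (cylinder M I J A) = measure M (cylinder M I (shift_set J a) (shift_set A a))"
proof -
  have "shift_set J a = (+) a -` J"
    by (auto simp: shift_set_def)
  then have "finite (J \<union> shift_set J a)"
    using \<open>finite J\<close> by (simp add: finite_vimageI)
  then obtain u where u: "J \<subseteq> {- int u..int u}" "shift_set J a \<subseteq> {- int u..int u}"
    by (rule finite_window_bound) auto
  have zero: "0 \<in> shift_set J a" "0 \<in> shift_set A a"
    using assms by (simp_all add: shift_set_def)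
  let ?B = "\<lambda>n. {\<omega> \<in> space (Mn n). In n 0 \<omega>}"
  let ?F = "\<lambda>K B n. cond_expect (Mn n) (?B n)
    (\<lambda>\<omega>. of_bool (\<forall>t\<in>K. window u u (In n) \<omega> t = (t \<in> B)))"
  have eq: "?F J A n = ?F (shift_set J a) (shift_set A a) n" for n
    using measure_cylinder_shift[OF assms(1,2), of n J A a]
    by (simp only: cond_expect_window_pattern[OF u(1) \<open>0 \<in> J\<close> \<open>0 \<in> A\<close>]
        cond_expect_window_pattern[OF u(2) zero])
  have lim: "?F K B \<longlonglongrightarrow> measure M (cylinder M I K B)" if "K \<subseteq> {- int u..int u}" for K B
    using conv[unfolded cond_window_conv_def, rule_format,
        where u = u and v = u and f = "\<lambda>w. of_bool (\<forall>t\<in>K. w t = (t \<in> B))"]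
    by (simp only: integral_window_pattern[OF that])
  show ?thesis
    using lim[OF u(1), of A] lim[OF u(2), of "shift_set A a"] unfolding eq by (rule LIMSEQ_unique)
qed

lemma tendsto_measure_cylinder_exhaust:
  assumes "finite_measure M" "bool_process M X" "incseq J" "(\<Union>n. J n) = UNIV"
  shows "(\<lambda>n. measure M (cylinder M X (J n) A)) \<longlonglongrightarrow> measure M (cylinder M X UNIV A)"
proof -
  have "(\<lambda>n. measure M (cylinder M X (J n) A)) \<longlonglongrightarrow> measure M (\<Inter>n. cylinder M X (J n) A)"
  proof (rule finite_measure.finite_Lim_measure_decseq[OF assms(1)])
    show "range (\<lambda>n. cylinder M X (J n) A) \<subseteq> sets M"
      using sets_cylinder[OF assms(2)] by blast
    show "decseq (\<lambda>n. cylinder M X (J n) A)"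
      using \<open>incseq J\<close> by (force simp: decseq_def incseq_def cylinder_def)
  qed
  moreover have "(\<Inter>n. cylinder M X (J n) A) = cylinder M X UNIV A"
    using \<open>(\<Union>n. J n) = UNIV\<close> by (auto simp: cylinder_def)
  ultimately show ?thesis
    by simp
qed

lemma measure_cylinder_UNIV_shift_limit:
  assumes "finite_measure M" "bool_process M I"
    and "\<And>n. bool_process (Mn n) (In n)" "\<And>n. stationary (Mn n) (In n)"
    and "cond_window_conv Mn In M I"
    and "0 \<in> A" "a \<in> A"
  shows "measure M (cylinder M I UNIV A) = measure M (cylinder M I UNIV (shift_set A a))"
proof -
  define J where "J n = {- int (n + nat \<bar>a\<bar>)..int (n + nat \<bar>a\<bar>)}" for n
  have "t \<in> J (nat \<bar>t\<bar>)" "a + t \<in> J (nat \<bar>t\<bar>)" for t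
    by (auto simp: J_def)
  then have exhaust: "(\<Union>n. J n) = UNIV" "(\<Union>n. shift_set (J n) a) = UNIV"
    by (auto simp: shift_set_def)
  have mono: "incseq J" "incseq (\<lambda>n. shift_set (J n) a)"
    by (auto simp: J_def incseq_def shift_set_def)
  have eq: "measure M (cylinder M I (J n) A) =
      measure M (cylinder M I (shift_set (J n) a) (shift_set A a))" for n
    using assms(6,7) by (intro measure_cylinder_shift_limit[OF assms(3-5)]) (auto simp: J_def)
  note tendsto = tendsto_measure_cylinder_exhaust[OF assms(1,2)]
  show ?thesis
    using tendsto[OF mono(1) exhaust(1), of A] tendsto[OF mono(2) exhaust(2), of "shift_set A a"]
    unfolding eq by (rule LIMSEQ_unique)
qed

theorem corollary2p2:
  fixes M :: "'a measure" and I :: "int \<Rightarrow> 'a \<Rightarrow> bool"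
    and Mn :: "nat \<Rightarrow> 'b measure" and In :: "nat \<Rightarrow> int \<Rightarrow> 'b \<Rightarrow> bool"
  assumes "prob_space M" and "bool_process M I"
    and "\<And>n. prob_space (Mn n)"
    and "\<And>n. bool_process (Mn n) (In n)"
    and "\<And>n. stationary (Mn n) (In n)"
    and "\<And>n. measure (Mn n) {\<omega> \<in> space (Mn n). In n 0 \<omega>} > 0"
    and "cond_window_conv Mn In M I"
  defines "C \<equiv> (\<lambda>\<omega>. {t. I t \<omega>})"
  shows "(\<forall>A a. 0 \<in> A \<longrightarrow> a \<in> A \<longrightarrow>
            measure M {\<omega> \<in> space M. C \<omega> = A} =
            measure M {\<omega> \<in> space M. C \<omega> = shift_set A a})
       \<and> (\<forall>A a t1 t2. 0 \<in> A \<longrightarrow> t1 \<le> 0 \<longrightarrow> 0 \<le> t2 \<longrightarrow> a \<in> A \<inter> {t1..t2} \<longrightarrow>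
            measure M {\<omega> \<in> space M. C \<omega> \<inter> {t1..t2} = A \<inter> {t1..t2}} =
            measure M {\<omega> \<in> space M. C \<omega> \<inter> {t1 - a..t2 - a} = shift_set A a \<inter> {t1 - a..t2 - a}})"
proof -
  have C_eq: "{\<omega> \<in> space M. C \<omega> \<inter> J = B \<inter> J} = cylinder M I J B" for J B
    by (auto simp: C_def cylinder_def)
  have "{\<omega> \<in> space M. C \<omega> = B} = cylinder M I UNIV B" for B
    using C_eq[of UNIV B] by simp
  moreover have "measure M (cylinder M I UNIV A) = measure M (cylinder M I UNIV (shift_set A a))"
    if "0 \<in> A" "a \<in> A" for A a
    using prob_space.finite_measure[OF assms(1)] assms(2,4,5,7) that
    by (rule measure_cylinder_UNIV_shift_limit)
  moreover have "measure M (cylinder M I {t1..t2} A) =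
      measure M (cylinder M I {t1 - a..t2 - a} (shift_set A a))"
    if "0 \<in> A" "t1 \<le> 0" "0 \<le> t2" "a \<in> A \<inter> {t1..t2}" for A a t1 t2
    using that measure_cylinder_shift_limit[OF assms(4,5,7), of "{t1..t2}" a A]
    by (simp add: shift_set_atLeastAtMost)
  ultimately show ?thesis
    by (simp add: C_eq)
qed

end
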